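(* For every $x\in X$ we have $p\in\omega_T(x)$, where $p=(v_{0,0},v_{1,0},v_{2,0},\ldots)$.
   Context: Paths and cycles: a graph is $G=(V,E)$ with $V$ finite and $E\subset V\times V$. A path is a finite sequence of vertices $(u_0,\dots,u_L)$ with $(u_j,u_{j+1})\in E$; its length is $|\cdot|=L$; a cycle is a path with $u_0=u_L$. For paths where one ends where the next starts, $+$ denotes concatenation and $a\,c$ means the cycle $c$ traversed $a$ times. Construction: $G_0=(V_0,E_0)$ with $V_0=\{v_{0,0}\}$, $E_0=\{e_{0,0}\}$, $e_{0,0}=(v_{0,0},v_{0,0})$. For $n\geq1$, $G_n=(V_n,E_n)$ consists of a vertex $v_{n,0}$, the loop $e_{n,0}=(v_{n,0},v_{n,0})$, and $n$ cycles $c_{n,1},\dots,c_{n,n}$, each starting and ending at $v_{n,0}$, whose vertices other than $v_{n,0}$ are pairwise distinct (within each cycle and across cycles); $V_n$ is the set of all these vertices and $E_n$ consists of $e_{n,0}$ and the edges of the cycles. The maps $\varphi_n\colon V_{n+1}\to V_n$ and the lengths of the cycles $c_{n+1,i}$ are defined together: $\varphi_n(v_{n+1,0})=v_{n,0}$, and for each $i$ a path $P_{n,i}$ in $G_n$ from $v_{n,0}$ to $v_{n,0}$ is given; $c_{n+1,i}$ has length $|P_{n,i}|$ and $\varphi_n$ maps its $j$-th vertex to the $j$-th vertex of $P_{n,i}$ (written $\varphi_n(c_{n+1,i})=P_{n,i}$). The paths are: $P_{0,1}=10\,e_{0,0}$; for $n\geq1$: $P_{n,i}=e_{n,0}+2c_{n,i}+2c_{n,i+1}+\dots+2c_{n,n}+e_{n,0}$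 for $2\leq i\leq n$; $P_{n,n+1}=(n+2)^2\big(\sum_{i=1}^n|c_{n,i}|\big)\,e_{n,0}$; and $P_{n,1}=(1\,e_{n,0}+2c_{n,1})+(2\,e_{n,0}+2c_{n,1})+\dots+(k_n\,e_{n,0}+2c_{n,1})+e_{n,0}+2c_{n,2}+\dots+2c_{n,n}+e_{n,0}$, where $k_n=2\big(1+\sum_{i=1}^n|c_{n,i}|\big)$. Let $X=\{x\in\prod_{n\geq0}V_n:\varphi_n(x_{n+1})=x_n\ \forall n\}$ with metric $d(x,y)=2^{-\min\{i:x_i\neq y_i\}}$ ($d(x,x)=0$); $X$ is a compact zero-dimensional metric space, and $T\colon X\to X$ defined by $T(x)=y$ iff $(x_n,y_n)\in E_n$ for all $n$ is a well-defined homeomorphism. Write $x_n$ for the $n$-th coordinate of $x$. $\omega_T(x)=\bigcap_{n\geq0}\overline{\{T^k(x):k\geq n\}}$. *)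

theory Defs
  imports Complex_Main
begin

text \<open>Vertices of G_n are pairs of naturals: (0,0) is v_{n,0}; (i,j) with 1 <= i <= n and
 1 <= j < |c_{n,i}| is the j-th vertex of the cycle c_{n,i}.
 A closed path at v_{n,0} of length L is represented by the list of its first L vertices
 (the final vertex, which is v_{n,0}, is omitted); concatenation is list append.\<close>

type_synonym vtx = "nat \<times> nat"

definition v0 :: vtx where "v0 = (0,0)"

definition cycP :: "(nat \<Rightarrow> nat) \<Rightarrow> nat \<Rightarrow> vtx list" where
  "cycP L i = v0 # map (\<lambda>j. (i, j)) [1..<L i]"

definition loopP :: "nat \<Rightarrow> vtx list" where
  "loopP a = replicate a v0"

definition timesP :: "nat \<Rightarrow> vtx list \<Rightarrow> vtx list" where
  "timesP a c = concat (replicate a c)"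

definition Pdef :: "nat \<Rightarrow> (nat \<Rightarrow> nat) \<Rightarrow> nat \<Rightarrow> vtx list" where
  "Pdef n L i =
    (let S = (\<Sum>k = 1..n. L k); kn = 2 * (1 + S) in
     if i = 1 then
        concat (map (\<lambda>a. loopP a @ timesP 2 (cycP L 1)) [1..<kn + 1])
        @ loopP 1 @ concat (map (\<lambda>k. timesP 2 (cycP L k)) [2..<n + 1]) @ loopP 1
     else if 2 \<le> i \<and> i \<le> n then
        loopP 1 @ concat (map (\<lambda>k. timesP 2 (cycP L k)) [i..<n + 1]) @ loopP 1
     else if i = n + 1 then loopP ((n + 2)^2 * S)
     else [])"

primrec Pth :: "nat \<Rightarrow> nat \<Rightarrow> vtx list" where
  "Pth 0 = (\<lambda>i. if i = 1 then loopP 10 else [])"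
| "Pth (Suc m) = Pdef (Suc m) (\<lambda>k. length (Pth m k))"

text \<open>|c_{n,i}| for n >= 1, 1 <= i <= n: it equals |P_{n-1,i}|.\<close>
definition clen :: "nat \<Rightarrow> nat \<Rightarrow> nat" where
  "clen n i = (if n = 0 then 0 else length (Pth (n - 1) i))"

definition Vn :: "nat \<Rightarrow> vtx set" where
  "Vn n = {v0} \<union> {(i, j) | i j. 1 \<le> i \<and> i \<le> n \<and> 1 \<le> j \<and> j < clen n i}"

definition cycv :: "nat \<Rightarrow> nat \<Rightarrow> nat \<Rightarrow> vtx" where
  "cycv n i j = (if j = 0 \<or> j = clen n i then v0 else (i, j))"

definition En :: "nat \<Rightarrow> (vtx \<times> vtx) set" where
  "En n = {(v0, v0)} \<union>
     {(cycv n i j, cycv n i (Suc j)) | i j. 1 \<le> i \<and> i \<le> n \<and> j < clen n i}"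

text \<open>phi_n : V_{n+1} -> V_n, with phi_n(c_{n+1,i}) = P_{n,i}.\<close>
definition phi :: "nat \<Rightarrow> vtx \<Rightarrow> vtx" where
  "phi n v = (if v = v0 then v0 else Pth n (fst v) ! snd v)"

definition Xsp :: "(nat \<Rightarrow> vtx) set" where
  "Xsp = {x. (\<forall>n. x n \<in> Vn n) \<and> (\<forall>n. phi n (x (Suc n)) = x n)}"

definition dX :: "(nat \<Rightarrow> vtx) \<Rightarrow> (nat \<Rightarrow> vtx) \<Rightarrow> real" where
  "dX x y = (if x = y then 0 else (1/2) ^ (LEAST i. x i \<noteq> y i))"

definition Tmap :: "(nat \<Rightarrow> vtx) \<Rightarrow> (nat \<Rightarrow> vtx)" where
  "Tmap x = (THE y. y \<in> Xsp \<and> (\<forall>n. (x n, y n) \<in> En n))"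

definition Xclosure :: "(nat \<Rightarrow> vtx) set \<Rightarrow> (nat \<Rightarrow> vtx) set" where
  "Xclosure A = {y \<in> Xsp. \<forall>e>0. \<exists>a\<in>A. dX a y < e}"

definition omegaT :: "(nat \<Rightarrow> vtx) \<Rightarrow> (nat \<Rightarrow> vtx) set" where
  "omegaT x = (\<Inter>n. Xclosure {(Tmap ^^ k) x | k. k \<ge> n})"

definition pnt :: "nat \<Rightarrow> vtx" where
  "pnt = (\<lambda>n. v0)"

end

theory Submission
  imports Defs
begin

text \<open>Every vertex of G_m other than v_{m,0} lies on a cycle c_{m,i}, along which the m-th
  coordinate of T moves forward; so the orbit of any point has m-th coordinate v_{m,0} at arbitrarily
  late times. As phi_n(v_{n+1,0}) = v_{n,0}, the coordinates below m are then v_{l,0} as well, i.e.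
  the point is 2^{-m}-close to p.

  Most of the work is the well-definedness of T: every P_{n,i} is a closed path in G_n, so phi_n maps
  edges to edges, and its second vertex is v_{n,0}, so all successors of v_{n+1,0} have the same
  image under phi_n.\<close>

lemma v0_in_En: "(v0, v0) \<in> En n"
  by (simp add: En_def)

lemma v0_in_Vn: "v0 \<in> Vn n"
  by (simp add: Vn_def)

lemma Vn_cases:
  "u \<in> Vn n \<Longrightarrow> u = v0 \<or> (\<exists>i j. u = (i, j) \<and> 1 \<le> i \<and> i \<le> n \<and> 1 \<le> j \<and> j < clen n i)"
  by (auto simp: Vn_def)

lemma cycv_in_Vn: "1 \<le> i \<Longrightarrow> i \<le> n \<Longrightarrow> j \<le> clen n i \<Longrightarrow> cycv n i j \<in> Vn n"
  by (auto simp: cycv_def Vn_def)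

lemma cycv_eq_v0_iff: "1 \<le> i \<Longrightarrow> cycv n i j = v0 \<longleftrightarrow> j = 0 \<or> j = clen n i"
  by (auto simp: cycv_def v0_def)

lemma En_cases:
  assumes "(u, w) \<in> En n"
  obtains "u = v0" "w = v0"
    | i j where "u = cycv n i j" "w = cycv n i (Suc j)" "1 \<le> i" "i \<le> n" "j < clen n i"
  using assms unfolding En_def by blast

lemma En_subset_Vn: "(u, w) \<in> En n \<Longrightarrow> u \<in> Vn n \<and> w \<in> Vn n"
  by (erule En_cases) (auto simp: v0_in_Vn cycv_in_Vn)

lemma ex_En_successor: "u \<in> Vn n \<Longrightarrow> \<exists>w. (u, w) \<in> En n"
proof (drule Vn_cases, elim disjE exE conjE)
  fix i j assume ij: "u = (i, j)" "1 \<le> i" "i \<le> n" "1 \<le> j" "j < clen n i"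
  then have "u = cycv n i j" by (simp add: cycv_def)
  with ij show ?thesis unfolding En_def by blast
qed (use v0_in_En in blast)

lemma En_successor_off_v0:
  assumes "(u, w) \<in> En n" "u \<noteq> v0"
  shows "w = cycv n (fst u) (Suc (snd u))"
  using assms by (elim En_cases) (auto simp: cycv_def split: if_splits)

lemma En_successor_v0:
  assumes "(v0, w) \<in> En n"
  shows "w = v0 \<or> (\<exists>i. 1 \<le> i \<and> i \<le> n \<and> 0 < clen n i \<and> w = cycv n i 1)"
  using assms
proof (cases rule: En_cases)
  case (2 i j)
  then have "j = 0"
    using cycv_eq_v0_iff[of i n j] by auto
  with 2 show ?thesis by auto
qed simp

definition closed_path :: "nat \<Rightarrow> vtx list \<Rightarrow> bool" where
  "closed_path n P \<longleftrightarrow>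
     (P \<noteq> [] \<longrightarrow> hd P = v0) \<and> (\<forall>j < length P. (P ! j, (P @ [v0]) ! Suc j) \<in> En n)"

lemma closed_path_Nil: "closed_path n []"
  by (simp add: closed_path_def)

lemma closed_path_append:
  assumes P: "closed_path n P" and Q: "closed_path n Q"
  shows "closed_path n (P @ Q)"
proof -
  have Q_start: "(Q @ [v0]) ! 0 = v0"
    using Q by (cases Q) (auto simp: closed_path_def)
  have "((P @ Q) ! j, (P @ Q @ [v0]) ! Suc j) \<in> En n" if "j < length P + length Q" for j
  proof (cases "j < length P")
    case True
    have "(P @ Q @ [v0]) ! Suc j = (P @ [v0]) ! Suc j"
      using True Q_start by (cases "Suc j = length P") (auto simp: nth_append)
    with P True show ?thesis
      by (simp add: closed_path_def nth_append)
  next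
    case False
    then show ?thesis
      using Q that by (auto simp: closed_path_def nth_append Suc_diff_le)
  qed
  with P Q show ?thesis
    by (auto simp: closed_path_def hd_append)
qed

lemma closed_path_concat: "(\<And>P. P \<in> set Ps \<Longrightarrow> closed_path n P) \<Longrightarrow> closed_path n (concat Ps)"
  by (induction Ps) (auto intro: closed_path_append closed_path_Nil)

lemma closed_path_loopP: "closed_path n (loopP a)"
proof -
  have "loopP a @ [v0] = replicate (Suc a) v0"
    by (simp add: loopP_def replicate_append_same)
  then show ?thesis
    using v0_in_En by (auto simp: closed_path_def loopP_def hd_replicate)
qed

lemma closed_path_timesP: "closed_path n c \<Longrightarrow> closed_path n (timesP a c)"
  unfolding timesP_def by (rule closed_path_concat) auto

lemma closed_path_cycP:
  assumes "1 \<le> k" "k \<le> n"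
  shows "closed_path n (cycP (clen n) k)"
proof (cases "clen n k = 0")
  case True
  then show ?thesis by (simp add: closed_path_def cycP_def v0_in_En)
next
  case False
  let ?P = "cycP (clen n) k"
  have len: "length ?P = clen n k"
    using False by (simp add: cycP_def)
  have vertex: "(?P @ [v0]) ! j = cycv n k j" if "j \<le> clen n k" for j
    using that len by (cases j) (auto simp: cycP_def nth_append cycv_def v0_def)
  have "(?P ! j, (?P @ [v0]) ! Suc j) \<in> En n" if "j < clen n k" for j
    using vertex[of j] vertex[of "Suc j"] that len assms
    by (auto simp: En_def nth_append)
  with len show ?thesis
    by (auto simp: closed_path_def cycP_def)
qed

lemma closed_path_subset_Vn:
  assumes "closed_path n P"
  shows "set P \<subseteq> Vn n"
proof
  fix u assume "u \<in> set P"
  then obtain j where "j < length P" "u = P ! j"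
    by (auto simp: in_set_conv_nth)
  with assms have "(u, (P @ [v0]) ! Suc j) \<in> En n"
    by (simp add: closed_path_def)
  then show "u \<in> Vn n"
    using En_subset_Vn by blast
qed

lemma Pth_eq_Pdef:
  assumes "1 \<le> n"
  shows "Pth n = Pdef n (clen n)"
proof -
  obtain m where n: "n = Suc m"
    using assms by (cases n) auto
  have "(\<lambda>k. length (Pth m k)) = clen n"
    by (simp add: n clen_def fun_eq_iff)
  then show ?thesis
    by (simp add: n)
qed

lemma closed_path_Pdef:
  assumes "1 \<le> n" "1 \<le> i" "i \<le> Suc n"
  shows "closed_path n (Pdef n (clen n) i)"
proof -
  have cycles: "closed_path n (timesP 2 (cycP (clen n) k))" if "1 \<le> k" "k \<le> n" for k
    using that by (intro closed_path_timesP closed_path_cycP)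
  have "closed_path n (concat (map (\<lambda>k. timesP 2 (cycP (clen n) k)) [a..<Suc n]))"
    if "1 \<le> a" for a
    using that by (intro closed_path_concat) (auto intro: cycles)
  moreover have "closed_path n (concat (map (\<lambda>a. loopP a @ timesP 2 (cycP (clen n) 1)) as))" for as
    using cycles[of 1] assms
    by (intro closed_path_concat) (auto intro: closed_path_append closed_path_loopP)
  ultimately show ?thesis
    using assms closed_path_loopP unfolding Pdef_def Let_def
    by (auto intro!: closed_path_append simp del: upt_Suc)
qed

lemma closed_path_Pth: "1 \<le> i \<Longrightarrow> i \<le> Suc n \<Longrightarrow> closed_path n (Pth n i)"
  by (cases "n = 0") (auto simp: Pth_eq_Pdef closed_path_loopP closed_path_Pdef)

lemma Pdef_nth_Suc_0: "Suc 0 < length (Pdef n L i) \<Longrightarrow> Pdef n L i ! Suc 0 = v0"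
  unfolding Pdef_def Let_def
  by (auto simp: upt_conv_Cons loopP_def timesP_def cycP_def numeral_2_eq_2 nth_append
      simp del: upt_Suc split: if_splits)

lemma Pth_nth_Suc_0: "Suc 0 < length (Pth n i) \<Longrightarrow> Pth n i ! Suc 0 = v0"
  by (cases "n = 0") (auto simp: Pth_eq_Pdef loopP_def Pdef_nth_Suc_0)

lemma phi_v0 [simp]: "phi n v0 = v0"
  by (simp add: phi_def)

lemma phi_in_Vn:
  assumes "v \<in> Vn (Suc n)"
  shows "phi n v \<in> Vn n"
  using Vn_cases[OF assms]
proof (elim disjE exE conjE)
  fix i j assume ij: "v = (i, j)" "1 \<le> i" "i \<le> Suc n" "1 \<le> j" "j < clen (Suc n) i"
  then have "phi n v = Pth n i ! j" "j < length (Pth n i)"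
    by (auto simp: phi_def v0_def clen_def)
  with closed_path_subset_Vn[OF closed_path_Pth] ij show ?thesis
    by (metis nth_mem subsetD)
qed (simp add: v0_in_Vn)

lemma phi_cycv:
  assumes "1 \<le> i" "i \<le> Suc n" "j \<le> clen (Suc n) i" "0 < clen (Suc n) i"
  shows "phi n (cycv (Suc n) i j) = (Pth n i @ [v0]) ! j"
proof -
  have len: "length (Pth n i) = clen (Suc n) i"
    by (simp add: clen_def)
  have "Pth n i ! 0 = v0"
    using closed_path_Pth[OF assms(1,2)] assms(4) len by (auto simp: closed_path_def hd_conv_nth)
  with assms len show ?thesis
    by (cases "j = 0") (auto simp: cycv_def phi_def v0_def nth_append)
qed

lemma phi_En:
  assumes "(u, w) \<in> En (Suc n)"
  shows "(phi n u, phi n w) \<in> En n"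
  using assms
proof (cases rule: En_cases)
  case (2 i j)
  have len: "length (Pth n i) = clen (Suc n) i"
    by (simp add: clen_def)
  have "(Pth n i ! j, (Pth n i @ [v0]) ! Suc j) \<in> En n"
    using closed_path_Pth[OF 2(3,4)] 2(5) len by (simp add: closed_path_def)
  with 2 len show ?thesis
    by (simp add: phi_cycv nth_append)
qed (simp add: v0_in_En)

lemma phi_En_successor_unique:
  assumes "(u, w1) \<in> En (Suc n)" "(u, w2) \<in> En (Suc n)"
  shows "phi n w1 = phi n w2"
proof (cases "u = v0")
  case False
  then show ?thesis
    using En_successor_off_v0[OF assms(1) False] En_successor_off_v0[OF assms(2) False] by simp
next
  case True
  have "phi n w = v0" if "(v0, w) \<in> En (Suc n)" for w
    using En_successor_v0[OF that]
  proof (elim disjE exE conjE)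
    fix i assume i: "1 \<le> i" "i \<le> Suc n" "0 < clen (Suc n) i" "w = cycv (Suc n) i 1"
    have "length (Pth n i) = clen (Suc n) i"
      by (simp add: clen_def)
    with i show ?thesis
      using Pth_nth_Suc_0[of n i] by (cases "clen (Suc n) i = 1") (auto simp: phi_cycv nth_append)
  qed simp
  with assms True show ?thesis by simp
qed

lemma Xsp_phi: "x \<in> Xsp \<Longrightarrow> phi n (x (Suc n)) = x n"
  by (simp add: Xsp_def)

lemma Xsp_Vn: "x \<in> Xsp \<Longrightarrow> x n \<in> Vn n"
  by (simp add: Xsp_def)

lemma Xsp_successor_unique:
  assumes "y \<in> Xsp" "z \<in> Xsp" "\<forall>n. (x n, y n) \<in> En n" "\<forall>n. (x n, z n) \<in> En n"
  shows "y = z"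
proof
  fix n
  have "y n = phi n (y (Suc n))" "z n = phi n (z (Suc n))"
    using assms(1,2) by (simp_all add: Xsp_phi)
  then show "y n = z n"
    using assms(3,4) phi_En_successor_unique by metis
qed

lemma ex_Xsp_successor:
  assumes x: "x \<in> Xsp"
  shows "\<exists>y \<in> Xsp. \<forall>n. (x n, y n) \<in> En n"
proof -
  have "\<forall>n. \<exists>w. (x (Suc n), w) \<in> En (Suc n)"
    using ex_En_successor Xsp_Vn[OF x] by blast
  then obtain w where w: "\<And>n. (x (Suc n), w n) \<in> En (Suc n)"
    by (metis choice)
  define y where "y n = phi n (w n)" for n
  have y_En: "(x n, y n) \<in> En n" for n
    using phi_En[OF w[of n]] Xsp_phi[OF x, of n] by (simp add: y_def)
  have "phi n (y (Suc n)) = y n" for n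
    using phi_En_successor_unique[OF y_En w] by (simp add: y_def)
  moreover have "y n \<in> Vn n" for n
    using phi_in_Vn En_subset_Vn[OF w] by (simp add: y_def)
  ultimately have "y \<in> Xsp"
    by (simp add: Xsp_def)
  with y_En show ?thesis by blast
qed

lemma Tmap_in_Xsp_En:
  assumes "x \<in> Xsp"
  shows "Tmap x \<in> Xsp" "(x n, Tmap x n) \<in> En n"
proof -
  obtain y where y: "y \<in> Xsp" "\<forall>n. (x n, y n) \<in> En n"
    using ex_Xsp_successor[OF assms] by blast
  have "Tmap x = y"
    unfolding Tmap_def
    by (rule the_equality) (use y Xsp_successor_unique in blast)+
  with y show "Tmap x \<in> Xsp" "(x n, Tmap x n) \<in> En n"
    by simp_all
qed

lemma funpow_Tmap_in_Xsp: "x \<in> Xsp \<Longrightarrow> (Tmap ^^ k) x \<in> Xsp"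
  by (induction k) (auto intro: Tmap_in_Xsp_En)

lemma Tmap_returns_to_v0:
  assumes "z \<in> Xsp"
  shows "\<exists>k. (Tmap ^^ k) z m = v0"
  using assms
proof (induction "clen m (fst (z m)) - snd (z m)" arbitrary: z rule: less_induct)
  case less
  show ?case
  proof (cases "z m = v0")
    case True
    then show ?thesis
      by (metis funpow_0)
  next
    case False
    then obtain i j where ij: "z m = (i, j)" "1 \<le> i" "i \<le> m" "1 \<le> j" "j < clen m i"
      using Vn_cases[OF Xsp_Vn[OF less.prems]] by blast
    have T: "Tmap z m = cycv m i (Suc j)"
      using En_successor_off_v0[OF Tmap_in_Xsp_En(2)[OF less.prems] False] ij by simp
    show ?thesis
    proof (cases "Suc j = clen m i")
      case True
      with T have "(Tmap ^^ 1) z m = v0"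
        by (simp add: cycv_def)
      then show ?thesis ..
    next
      case False
      with T ij have "clen m (fst (Tmap z m)) - snd (Tmap z m) < clen m (fst (z m)) - snd (z m)"
        by (simp add: cycv_def)
      from less.hyps[OF this Tmap_in_Xsp_En(1)[OF less.prems]]
      obtain k where "(Tmap ^^ k) (Tmap z) m = v0" ..
      then have "(Tmap ^^ Suc k) z m = v0"
        by (simp add: funpow_Suc_right del: funpow.simps)
      then show ?thesis ..
    qed
  qed
qed

lemma Xsp_v0_downward:
  assumes "x \<in> Xsp" "x m = v0" "l \<le> m"
  shows "x l = v0"
  using assms(3,2)
proof (induction rule: dec_induct)
  case (step k)
  then show ?case
    using Xsp_phi[OF assms(1), of k] by simp
qed

lemma dX_pnt_le:
  assumes "z \<in> Xsp" "z m = v0"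
  shows "dX z pnt \<le> (1/2) ^ m"
proof (cases "z = pnt")
  case False
  define L where "L = (LEAST i. z i \<noteq> pnt i)"
  have "\<exists>i. z i \<noteq> pnt i"
    using False by auto
  then have "z L \<noteq> pnt L"
    unfolding L_def by (rule LeastI_ex)
  then have "m < L"
    using Xsp_v0_downward[OF assms, of L] by (cases "L \<le> m") (auto simp: pnt_def)
  then have "((1::real)/2) ^ L \<le> (1/2) ^ m"
    by (intro power_decreasing) auto
  with False show ?thesis
    by (simp add: dX_def L_def)
qed (simp add: dX_def)

lemma pnt_in_Xclosure:
  assumes "\<And>m. \<exists>z \<in> A. z \<in> Xsp \<and> z m = v0"
  shows "pnt \<in> Xclosure A"
proof -
  have "\<exists>z \<in> A. dX z pnt < e" if "e > 0" for e :: real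
  proof -
    obtain m where m: "((1::real)/2) ^ m < e"
      using real_arch_pow_inv[OF \<open>e > 0\<close>, of "1/2"] by auto
    obtain z where "z \<in> A" "z \<in> Xsp" "z m = v0"
      using assms by blast
    with m dX_pnt_le show ?thesis
      by force
  qed
  moreover have "pnt \<in> Xsp"
    by (simp add: Xsp_def pnt_def v0_in_Vn)
  ultimately show ?thesis
    by (simp add: Xclosure_def)
qed

theorem lemma3p3:
  assumes "x \<in> Xsp"
  shows "pnt \<in> omegaT x"
  unfolding omegaT_def
proof (intro INT_I pnt_in_Xclosure)
  fix n m
  obtain k where "(Tmap ^^ k) ((Tmap ^^ n) x) m = v0"
    using Tmap_returns_to_v0[OF funpow_Tmap_in_Xsp[OF assms]] ..
  then have "(Tmap ^^ (k + n)) x m = v0"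
    by (simp add: funpow_add)
  moreover have "(Tmap ^^ (k + n)) x \<in> Xsp"
    using funpow_Tmap_in_Xsp[OF assms] .
  ultimately show "\<exists>z \<in> {(Tmap ^^ k) x |k. n \<le> k}. z \<in> Xsp \<and> z m = v0"
    by fastforce
qed

end
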